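(* Let $X$ be a path-connected topological space with base point $x_0\in X$, and let $i_1,i_2\colon X\to X\times X$ be the inclusions $i_1(x)=(x,x_0)$ and $i_2(x)=(x_0,x)$. Then $\mathrm{D}(i_1,i_2)=\mathrm{cat}(X)$.
   Context: For continuous maps $f,g\colon X\to Y$ between topological spaces, the homotopic distance $\mathrm{D}(f,g)$ is the least integer $n\geq 0$ such that there is an open cover $\{U_0,\dots,U_n\}$ of $X$ with $f|_{U_j}\simeq g|_{U_j}$ (homotopic as maps $U_j\to Y$) for all $j$; if no such cover exists, $\mathrm{D}(f,g)=\infty$. For a path-connected space $X$, the (normalized) Lusternik–Schnirelmann category $\mathrm{cat}(X)$ is the least integer $n\geq 0$ such that $X$ can be covered by $n+1$ open sets $U$ whose inclusion $U\hookrightarrow X$ is null-homotopic. *)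

theory Defs
  imports "HOL-Analysis.Analysis" "HOL-Library.Extended_Nat"
begin

text \<open>Homotopic distance D(f,g): least n such that there is an open cover
  U 0, ..., U n of X with f and g homotopic on each U j (as maps U j \<rightarrow> Y);
  infinity if no such cover exists (INF of the empty set in enat).\<close>
definition homotopic_distance ::
  "'a topology \<Rightarrow> 'b topology \<Rightarrow> ('a \<Rightarrow> 'b) \<Rightarrow> ('a \<Rightarrow> 'b) \<Rightarrow> enat" where
  "homotopic_distance X Y f g =
     (INF n \<in> {n. \<exists>U :: nat \<Rightarrow> 'a set.
                 (\<forall>j\<le>n. openin X (U j)) \<and> topspace X \<subseteq> (\<Union>j\<le>n. U j) \<and>
                 (\<forall>j\<le>n. homotopic_with (\<lambda>h. True) (subtopology X (U j)) Y f g)}. enat n)"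

definition LS_category :: "'a topology \<Rightarrow> enat" where
  "LS_category X =
     (INF n \<in> {n. \<exists>U :: nat \<Rightarrow> 'a set.
                 (\<forall>j\<le>n. openin X (U j)) \<and> topspace X \<subseteq> (\<Union>j\<le>n. U j) \<and>
                 (\<forall>j\<le>n. \<exists>c. homotopic_with (\<lambda>h. True) (subtopology X (U j)) X id (\<lambda>x. c))}. enat n)"

end

theory Submission
  imports Defs
begin

text \<open>On an open set U, projecting a homotopy between the two inclusions to the first factor
  contracts U to the base point; conversely a contraction of U to x0, followed by either
  inclusion, connects both of them to the constant map at (x0, x0). Since X is path-connected,
  a contraction to some point can always be moved to x0, so both invariants are infima over
  the same family of covers.\<close>

lemma nullhomotopic_iff_homotopic_to_point:
  assumes "path_connected_space Y" and "b \<in> topspace Y"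
  shows "(\<exists>c. homotopic_with (\<lambda>h. True) Z Y f (\<lambda>z. c))
           \<longleftrightarrow> homotopic_with (\<lambda>h. True) Z Y f (\<lambda>z. b)"
proof
  assume "\<exists>c. homotopic_with (\<lambda>h. True) Z Y f (\<lambda>z. c)"
  then obtain c where fc: "homotopic_with (\<lambda>h. True) Z Y f (\<lambda>z. c)" ..
  have "Z = trivial_topology \<or> c \<in> topspace Y"
    using homotopic_with_imp_continuous_maps [OF fc] by simp
  with assms have "homotopic_with (\<lambda>h. True) Z Y (\<lambda>z. c) (\<lambda>z. b)"
    by (auto simp: homotopic_constant_maps path_connected_space_iff_path_component)
  with fc show "homotopic_with (\<lambda>h. True) Z Y f (\<lambda>z. b)"
    by (rule homotopic_with_trans)
qed blast

lemma homotopic_axis_inclusions_iff: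
  assumes "x0 \<in> topspace X"
  shows "homotopic_with (\<lambda>h. True) Z (prod_topology X X) (\<lambda>z. (f z, x0)) (\<lambda>z. (x0, f z))
           \<longleftrightarrow> homotopic_with (\<lambda>h. True) Z X f (\<lambda>z. x0)"
proof
  assume "homotopic_with (\<lambda>h. True) Z (prod_topology X X) (\<lambda>z. (f z, x0)) (\<lambda>z. (x0, f z))"
  from homotopic_with_compose_continuous_map_left [OF this continuous_map_fst]
  show "homotopic_with (\<lambda>h. True) Z X f (\<lambda>z. x0)"
    by (simp add: o_def)
next
  assume f0: "homotopic_with (\<lambda>h. True) Z X f (\<lambda>z. x0)"
  have "continuous_map X (prod_topology X X) (\<lambda>x. (x, x0))"
       "continuous_map X (prod_topology X X) (\<lambda>x. (x0, x))"
    using assms by (simp_all add: continuous_map_pairwise o_def)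
  from this [THEN homotopic_with_compose_continuous_map_left [OF f0]]
  have "homotopic_with (\<lambda>h. True) Z (prod_topology X X) (\<lambda>z. (f z, x0)) (\<lambda>z. (x0, x0))"
       "homotopic_with (\<lambda>h. True) Z (prod_topology X X) (\<lambda>z. (x0, f z)) (\<lambda>z. (x0, x0))"
    by (simp_all add: o_def)
  from homotopic_with_trans [OF this(1) homotopic_with_symD [OF this(2)]]
  show "homotopic_with (\<lambda>h. True) Z (prod_topology X X) (\<lambda>z. (f z, x0)) (\<lambda>z. (x0, f z))" .
qed

theorem proposition2p6:
  fixes X :: "'a topology" and x0 :: 'a
  assumes "path_connected_space X" and "x0 \<in> topspace X"
  shows "homotopic_distance X (prod_topology X X) (\<lambda>x. (x, x0)) (\<lambda>x. (x0, x))
           = LS_category X"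
proof -
  have "homotopic_with (\<lambda>h. True) (subtopology X U) (prod_topology X X) (\<lambda>x. (x, x0)) (\<lambda>x. (x0, x))
          \<longleftrightarrow> (\<exists>c. homotopic_with (\<lambda>h. True) (subtopology X U) X id (\<lambda>x. c))" for U
  proof -
    have "homotopic_with (\<lambda>h. True) (subtopology X U) (prod_topology X X) (\<lambda>x. (x, x0)) (\<lambda>x. (x0, x))
            \<longleftrightarrow> homotopic_with (\<lambda>h. True) (subtopology X U) X id (\<lambda>x. x0)"
      using homotopic_axis_inclusions_iff [OF assms(2), of "subtopology X U" id] by simp
    also have "\<dots> \<longleftrightarrow> (\<exists>c. homotopic_with (\<lambda>h. True) (subtopology X U) X id (\<lambda>x. c))"
      using nullhomotopic_iff_homotopic_to_point [OF assms] by blast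
    finally show ?thesis .
  qed
  then show ?thesis
    unfolding homotopic_distance_def LS_category_def by simp
qed

end
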